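(* Let $\mathcal{X},\mathcal{Y}$ be finite sets, $p(X,Y)$ a fully supported probability distribution on $\mathcal{X}\times\mathcal{Y}$, and $0\le\lambda\le I(X;Y)$. For $\kappa_{\mathcal{X}}\in C(\mathcal{X},\mathbb{N})$ let $\kappa=\kappa_{\mathcal{X}}\otimes e_{\mathcal{Y}}\in C(\mathcal{X}\times\mathcal{Y},\mathbb{N}\times\mathcal{Y})$ be the channel $\kappa(t,y'|x,y)=\kappa_{\mathcal{X}}(t|x)\,\delta_{y'=y}$, and let $C_{\mathrm{IB}(X,Y)}$ be the set of all such channels. Consider: (A) the problem of minimising $I_\kappa(X,Y;T)$ over $\kappa\in C_{\mathrm{IB}(X,Y)}$ subject to $D(\kappa(p(X,Y))\|\kappa(p(X)p(Y)))=\lambda$, where $T$ is the output of $\kappa$ (with values in $\mathbb{N}\times\mathcal{Y}$) and the mutual information is computed from $p(x,y)\kappa(t|x,y)$; (B) the Information Bottleneck problem of minimising $I_q(X;T_{\mathrm{IB}})$ over $q(T_{\mathrm{IB}}|X)\in C(\mathcal{X},\mathbb{N})$ subject to $I_q(Y;T_{\mathrm{IB}})\ge\lambda$, where the information quantities are computed from $q(x,y,t)=p(x,y)q(t|x)$. Then $\kappa_{\mathcal{X}}\otimes e_{\mathcal{Y}}$ is a solution (minimiser) of (A) if and only if $\kappa_{\mathcal{X}}$ is a solution of (B).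
   Context: For sets $\mathcal{A},\mathcal{B}$, $C(\mathcal{A},\mathcal{B})$ denotes the set of channels (conditional probabilities) from $\mathcal{A}$ to $\mathcal{B}$. For a channel $\kappa$ and a distribution $r$ on its input space, $\kappa(r)$ denotes the output distribution $\sum_{a}\kappa(\cdot|a)r(a)$. $D$ is the Kullback–Leibler divergence and $p(X),p(Y)$ are the marginals of $p(X,Y)$. *)

theory Defs
  imports "HOL-Analysis.Analysis"
begin

definition channel :: "('a \<Rightarrow> 'b \<Rightarrow> real) \<Rightarrow> bool" where
  "channel k \<longleftrightarrow> (\<forall>a. (\<forall>b. 0 \<le> k a b) \<and> (k a has_sum 1) UNIV)"

definition apply_chan :: "('a::finite \<Rightarrow> 'b \<Rightarrow> real) \<Rightarrow> ('a \<Rightarrow> real) \<Rightarrow> 'b \<Rightarrow> real" where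
  "apply_chan k r = (\<lambda>b. \<Sum>a\<in>UNIV. k a b * r a)"

text \<open>Kullback-Leibler divergence of (countably supported) distributions, natural log,
  convention 0 ln 0 = 0; value +infinity if not absolutely continuous or the series diverges.\<close>
definition kl_div :: "('b \<Rightarrow> real) \<Rightarrow> ('b \<Rightarrow> real) \<Rightarrow> ereal" where
  "kl_div P Q =
     (if (\<forall>b. P b \<noteq> 0 \<longrightarrow> Q b \<noteq> 0) \<and> (\<lambda>b. P b * ln (P b / Q b)) summable_on UNIV
      then ereal (\<Sum>\<^sub>\<infinity>b. P b * ln (P b / Q b)) else \<infinity>)"

definition marg1 :: "('a \<times> 'b \<Rightarrow> real) \<Rightarrow> 'a \<Rightarrow> real" where
  "marg1 J a = (\<Sum>\<^sub>\<infinity>b. J (a, b))"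

definition marg2 :: "('a \<times> 'b \<Rightarrow> real) \<Rightarrow> 'b \<Rightarrow> real" where
  "marg2 J b = (\<Sum>\<^sub>\<infinity>a. J (a, b))"

definition mutual_info :: "('a \<times> 'b \<Rightarrow> real) \<Rightarrow> ereal" where
  "mutual_info J = kl_div J (\<lambda>(a, b). marg1 J a * marg2 J b)"

definition ib_ext :: "('x \<Rightarrow> nat \<Rightarrow> real) \<Rightarrow> ('x \<times> 'y) \<Rightarrow> (nat \<times> 'y) \<Rightarrow> real" where
  "ib_ext kX = (\<lambda>(x, y) (t, y'). kX x t * (if y' = y then 1 else 0))"

definition C_IB :: "(('x \<times> 'y) \<Rightarrow> (nat \<times> 'y) \<Rightarrow> real) set" where
  "C_IB = {ib_ext kX | kX. channel kX}"

definition objA :: "('x::finite \<times> 'y::finite \<Rightarrow> real) \<Rightarrow> (('x \<times> 'y) \<Rightarrow> (nat \<times> 'y) \<Rightarrow> real) \<Rightarrow> ereal" where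
  "objA p k = mutual_info (\<lambda>(xy, t). p xy * k xy t)"

definition constrA :: "('x::finite \<times> 'y::finite \<Rightarrow> real) \<Rightarrow> real \<Rightarrow> (('x \<times> 'y) \<Rightarrow> (nat \<times> 'y) \<Rightarrow> real) \<Rightarrow> bool" where
  "constrA p lam k \<longleftrightarrow>
     kl_div (apply_chan k p) (apply_chan k (\<lambda>(x, y). marg1 p x * marg2 p y)) = ereal lam"

definition solves_A where
  "solves_A p lam k \<longleftrightarrow> k \<in> C_IB \<and> constrA p lam k \<and>
     (\<forall>k'\<in>C_IB. constrA p lam k' \<longrightarrow> objA p k \<le> objA p k')"

definition objB :: "('x::finite \<times> 'y::finite \<Rightarrow> real) \<Rightarrow> ('x \<Rightarrow> nat \<Rightarrow> real) \<Rightarrow> ereal" where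
  "objB p q = mutual_info (\<lambda>(x, t). \<Sum>y\<in>UNIV. p (x, y) * q x t)"

definition constrB :: "('x::finite \<times> 'y::finite \<Rightarrow> real) \<Rightarrow> real \<Rightarrow> ('x \<Rightarrow> nat \<Rightarrow> real) \<Rightarrow> bool" where
  "constrB p lam q \<longleftrightarrow> ereal lam \<le> mutual_info (\<lambda>(y, t). \<Sum>x\<in>UNIV. p (x, y) * q x t)"

definition solves_B where
  "solves_B p lam q \<longleftrightarrow> channel q \<and> constrB p lam q \<and>
     (\<forall>q'. channel q' \<longrightarrow> constrB p lam q' \<longrightarrow> objB p q \<le> objB p q')"

end

theory Submission
  imports Defs
begin

(* Write I_X(q) = I(X;T) and I_Y(q) = I(Y;T) for a channel q from X to T. For kappa = q (x) e_Y the
   constraint of (A) reads I_Y(q) = lambda, and its objective is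
   I(X,Y;T,Y) = I_X(q) - I_Y(q) + H(Y), so on the feasible set (A) minimises I_X(q).
   Following q by an erasure that keeps the output with probability a scales both I_X and I_Y
   by a. Since I_Y <= I_X (data processing), a channel with I_Y(q) > lambda can be scaled down
   onto the level set I_Y = lambda at no greater cost, so minimising I_X over I_Y = lambda and
   over I_Y >= lambda have the same minimisers. *)

lemma sum_UNIV_prod:
  fixes f :: "'a::finite \<times> 'b::finite \<Rightarrow> 'c::comm_monoid_add"
  shows "(\<Sum>z\<in>UNIV. f z) = (\<Sum>x\<in>UNIV. \<Sum>y\<in>UNIV. f (x, y))"
  by (simp add: sum.cartesian_product)

lemma has_sum_sum_finite:
  fixes f :: "'i \<Rightarrow> 'a \<Rightarrow> 'b::topological_comm_monoid_add"
  assumes "finite I" "\<And>i. i \<in> I \<Longrightarrow> (f i has_sum s i) A"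
  shows "((\<lambda>a. \<Sum>i\<in>I. f i a) has_sum (\<Sum>i\<in>I. s i)) A"
  using assms by (induction I rule: finite_induct) (auto intro: has_sum_add)

lemma has_sum_prod_finite_fst:
  fixes f :: "'a::finite \<times> 'b \<Rightarrow> 'c::topological_comm_monoid_add"
  assumes "\<And>a. ((\<lambda>b. f (a, b)) has_sum s a) UNIV"
  shows "(f has_sum (\<Sum>a\<in>UNIV. s a)) UNIV"
proof -
  have "(f has_sum s a) (Pair a ` UNIV)" for a
    using assms by (subst has_sum_reindex) (auto simp: inj_on_def o_def)
  then have "(f has_sum (\<Sum>a\<in>UNIV. s a)) (\<Union>a. Pair a ` UNIV)"
    by (intro sum_has_sum) auto
  moreover have "(\<Union>a. Pair a ` UNIV) = (UNIV :: ('a \<times> 'b) set)"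
    by auto
  ultimately show ?thesis
    by simp
qed

lemma has_sum_prod_finite_snd:
  fixes f :: "'a \<times> 'b::finite \<Rightarrow> 'c::topological_comm_monoid_add"
  assumes "\<And>b. ((\<lambda>a. f (a, b)) has_sum s b) UNIV"
  shows "(f has_sum (\<Sum>b\<in>UNIV. s b)) UNIV"
proof -
  have "((\<lambda>z. f (prod.swap z)) has_sum (\<Sum>b\<in>UNIV. s b)) UNIV"
    by (rule has_sum_prod_finite_fst) (simp add: assms)
  then show ?thesis
    using has_sum_reindex_bij_betw[of prod.swap UNIV UNIV f] by simp
qed

lemma has_sum_nat_shift:
  fixes f :: "nat \<Rightarrow> 'a::topological_comm_monoid_add"
  assumes "(f has_sum s) UNIV"
  shows "((\<lambda>n. if n = 0 then c else f (n - 1)) has_sum (c + s)) UNIV"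
proof -
  let ?g = "\<lambda>n. if n = 0 then c else f (n - 1)"
  have "(?g has_sum s) (Suc ` UNIV)"
    using assms by (subst has_sum_reindex) (auto simp: o_def)
  then have "(?g has_sum (?g 0 + s)) (insert 0 (range Suc))"
    by (intro has_sum_insert) auto
  moreover have "insert 0 (range Suc) = UNIV"
    using nat.exhaust by auto
  ultimately show ?thesis
    by simp
qed

lemma has_sum_diff:
  fixes f g :: "'a \<Rightarrow> 'b::topological_ab_group_add"
  assumes "(f has_sum a) A" "(g has_sum b) A"
  shows "((\<lambda>x. f x - g x) has_sum (a - b)) A"
proof -
  have "((\<lambda>x. - g x) has_sum - b) A"
    using assms(2) by (simp add: has_sum_uminus)
  from has_sum_add[OF assms(1) this] show ?thesis
    by simp
qed

lemma kl_div_eqI: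
  assumes "\<And>b. P b \<noteq> 0 \<Longrightarrow> Q b \<noteq> 0"
    and "((\<lambda>b. P b * ln (P b / Q b)) has_sum D) UNIV"
  shows "kl_div P Q = ereal D"
  using assms unfolding kl_div_def by (auto simp: summable_on_def infsumI)

lemma kl_div_reindex:
  assumes "bij h"
  shows "kl_div (\<lambda>b. P (h b)) (\<lambda>b. Q (h b)) = kl_div P Q"
proof -
  have "(\<forall>b. P (h b) \<noteq> 0 \<longrightarrow> Q (h b) \<noteq> 0) \<longleftrightarrow> (\<forall>b. P b \<noteq> 0 \<longrightarrow> Q b \<noteq> 0)"
    using assms by (metis bij_pointE)
  with assms show ?thesis
    unfolding kl_div_def
    by (auto simp: summable_on_reindex_bij_betw[where f = "\<lambda>b. P b * ln (P b / Q b)"]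
        infsum_reindex_bij_betw[where f = "\<lambda>b. P b * ln (P b / Q b)"])
qed

lemma abs_xlnx_ratio_le:
  fixes a b c :: real
  assumes "0 \<le> a" "0 < c" "c * a \<le> b"
  shows "\<bar>a * ln (a / b)\<bar> \<le> a * \<bar>ln c\<bar> + b"
proof (cases "a = 0")
  case False
  then have "0 < a" "0 < b"
    using assms by (auto intro: less_le_trans[of 0 "c * a"])
  show ?thesis
  proof (cases "b \<le> a")
    case True
    have "ln (a / b) \<le> ln (1 / c)"
      using assms \<open>0 < a\<close> \<open>0 < b\<close> by (intro ln_mono) (auto simp: field_simps)
    then have "\<bar>ln (a / b)\<bar> \<le> \<bar>ln c\<bar>"
      using True \<open>0 < b\<close> assms by (simp add: ln_div)
    then have "a * \<bar>ln (a / b)\<bar> \<le> a * \<bar>ln c\<bar>"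
      using \<open>0 < a\<close> by (simp add: mult_left_mono)
    moreover have "\<bar>a * ln (a / b)\<bar> = a * \<bar>ln (a / b)\<bar>"
      using \<open>0 < a\<close> by (simp add: abs_mult)
    ultimately show ?thesis
      using \<open>0 < b\<close> by linarith
  next
    case False
    have "a * ln (b / a) \<le> a * (b / a - 1)"
      using \<open>0 < a\<close> \<open>0 < b\<close> by (intro mult_left_mono ln_le_minus_one) auto
    also have "\<dots> = b - a"
      using \<open>0 < a\<close> by (simp add: field_simps)
    finally have "a * ln (b / a) \<le> b - a" .
    moreover have "\<bar>a * ln (a / b)\<bar> = a * ln (b / a)"
      using False \<open>0 < a\<close> \<open>0 < b\<close> by (simp add: ln_div abs_mult)
    moreover have "0 \<le> a * \<bar>ln c\<bar>"
      using \<open>0 < a\<close> by simp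
    ultimately show ?thesis
      using \<open>0 < a\<close> by linarith
  qed
qed (use assms in simp)

lemma summable_on_xlnx_ratio:
  fixes P Q :: "'b \<Rightarrow> real"
  assumes "P summable_on UNIV" "Q summable_on UNIV"
    and "\<And>b. 0 \<le> P b" "0 < c" "\<And>b. c * P b \<le> Q b"
  shows "(\<lambda>b. P b * ln (P b / Q b)) summable_on UNIV"
proof -
  have "(\<lambda>b. norm (P b * \<bar>ln c\<bar> + Q b)) summable_on UNIV"
    using assms by (intro summable_on_iff_abs_summable_on_real[THEN iffD1] summable_on_add
        summable_on_cmult_left)
  then have "(\<lambda>b. norm (P b * ln (P b / Q b))) summable_on UNIV"
  proof (rule Infinite_Sum.abs_summable_on_comparison_test)
    fix b
    have "0 \<le> Q b"
      using assms(3)[of b] assms(4) assms(5)[of b] by (smt (verit) mult_nonneg_nonneg)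
    then show "norm (P b * ln (P b / Q b)) \<le> norm (P b * \<bar>ln c\<bar> + Q b)"
      using abs_xlnx_ratio_le[OF assms(3,4,5)] assms(3)[of b] by simp
  qed
  then show ?thesis
    by (rule summable_on_iff_abs_summable_on_real[THEN iffD2])
qed

lemma gibbs_inequality:
  fixes P Q :: "'b \<Rightarrow> real"
  assumes "(P has_sum 1) UNIV" "(Q has_sum s) UNIV" "0 < s"
    and "\<And>b. 0 \<le> P b" "\<And>b. 0 \<le> Q b" "\<And>b. P b \<noteq> 0 \<Longrightarrow> Q b \<noteq> 0"
    and "((\<lambda>b. P b * ln (P b / Q b)) has_sum D) UNIV"
  shows "- ln s \<le> D"
proof -
  have "((\<lambda>b. P b - Q b * (1 / s)) has_sum (1 - s * (1 / s))) UNIV"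
    using assms(1,2) by (intro has_sum_diff has_sum_cmult_left)
  moreover have "((\<lambda>b. P b * ln (P b / Q b) + P b * ln s) has_sum (D + 1 * ln s)) UNIV"
    using assms(1,7) by (intro has_sum_add has_sum_cmult_left)
  moreover have "P b - Q b * (1 / s) \<le> P b * ln (P b / Q b) + P b * ln s" for b
  proof (cases "P b = 0")
    case False
    then have "0 < P b" "0 < Q b"
      using assms(4-6)[of b] by auto
    then have "P b * ln (Q b / (s * P b)) \<le> P b * (Q b / (s * P b) - 1)"
      using \<open>0 < s\<close> by (intro mult_left_mono ln_le_minus_one) auto
    moreover have "P b * ln (Q b / (s * P b)) = - (P b * ln (P b / Q b) + P b * ln s)"
      using \<open>0 < P b\<close> \<open>0 < Q b\<close> \<open>0 < s\<close> by (simp add: ln_div ln_mult algebra_simps)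
    moreover have "P b * (Q b / (s * P b) - 1) = Q b * (1 / s) - P b"
      using \<open>0 < P b\<close> \<open>0 < s\<close> by (simp add: field_simps)
    ultimately show ?thesis
      by linarith
  qed (use assms(3,5) in simp)
  ultimately have "1 - s * (1 / s) \<le> D + 1 * ln s"
    by (rule has_sum_mono)
  then show ?thesis
    using \<open>0 < s\<close> by simp
qed

lemma channel_nonneg: "channel k \<Longrightarrow> 0 \<le> k a b"
  unfolding channel_def by blast

lemma channel_has_sum: "channel k \<Longrightarrow> (k a has_sum 1) UNIV"
  unfolding channel_def by blast

lemma has_sum_apply_chan:
  fixes r :: "'a::finite \<Rightarrow> real"
  assumes "channel k"
  shows "(apply_chan k r has_sum (\<Sum>a\<in>UNIV. r a)) UNIV"
proof -
  have "((\<lambda>b. \<Sum>a\<in>UNIV. k a b * r a) has_sum (\<Sum>a\<in>UNIV. 1 * r a)) UNIV"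
    by (intro has_sum_sum_finite has_sum_cmult_left channel_has_sum assms) simp
  then show ?thesis
    by (simp add: apply_chan_def[abs_def])
qed

lemma apply_chan_ge:
  fixes r :: "'a::finite \<Rightarrow> real"
  assumes "channel k" "\<And>a. 0 \<le> r a"
  shows "r a * k a b \<le> apply_chan k r b"
  unfolding apply_chan_def using assms
  by (subst mult.commute) (intro member_le_sum; simp add: channel_nonneg)

definition chan_info :: "('a::finite \<Rightarrow> real) \<Rightarrow> ('a \<Rightarrow> 'b \<Rightarrow> real) \<Rightarrow> real" where
  "chan_info r k = (\<Sum>a\<in>UNIV. r a * (\<Sum>\<^sub>\<infinity>b. k a b * ln (k a b / apply_chan k r b)))"

lemma has_sum_channel_divergence:
  fixes r :: "'a::finite \<Rightarrow> real"
  assumes "channel k" "\<And>a. 0 < r a"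
  shows "((\<lambda>b. k a b * ln (k a b / apply_chan k r b)) has_sum
           (\<Sum>\<^sub>\<infinity>b. k a b * ln (k a b / apply_chan k r b))) UNIV"
proof -
  have "(\<lambda>b. k a b * ln (k a b / apply_chan k r b)) summable_on UNIV"
  proof (rule summable_on_xlnx_ratio)
    show "k a summable_on UNIV" "apply_chan k r summable_on UNIV"
      using channel_has_sum[OF assms(1)] has_sum_apply_chan[OF assms(1)]
      by (auto intro: has_sum_imp_summable)
    show "r a * k a b \<le> apply_chan k r b" for b
      using assms by (intro apply_chan_ge) (auto intro: less_imp_le)
  qed (use assms in \<open>auto simp: channel_nonneg\<close>)
  then show ?thesis
    by (simp add: summable_iff_has_sum_infsum[symmetric])
qed

lemma kl_div_channel_output:
  fixes r :: "'a::finite \<Rightarrow> real"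
  assumes "channel k" "\<And>a. 0 < r a"
  shows "kl_div (\<lambda>(a, b). r a * k a b) (\<lambda>(a, b). r a * apply_chan k r b) = ereal (chan_info r k)"
proof (rule kl_div_eqI)
  fix z :: "'a \<times> 'b"
  obtain a b where z: "z = (a, b)"
    by fastforce
  assume "(case z of (a, b) \<Rightarrow> r a * k a b) \<noteq> 0"
  then have "0 < r a * k a b"
    using z assms by (simp add: less_le channel_nonneg)
  also have "\<dots> \<le> apply_chan k r b"
    using assms by (intro apply_chan_ge) (auto intro: less_imp_le)
  finally show "(case z of (a, b) \<Rightarrow> r a * apply_chan k r b) \<noteq> 0"
    using z assms(2)[of a] by simp
next
  have "((\<lambda>(a, b). r a * (k a b * ln (k a b / apply_chan k r b))) has_sum chan_info r k) UNIV"
    unfolding chan_info_def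
    by (rule has_sum_prod_finite_fst) (simp add: has_sum_cmult_right has_sum_channel_divergence assms)
  then show "((\<lambda>z. (case z of (a, b) \<Rightarrow> r a * k a b) *
      ln ((case z of (a, b) \<Rightarrow> r a * k a b) / (case z of (a, b) \<Rightarrow> r a * apply_chan k r b)))
      has_sum chan_info r k) UNIV"
    using assms(2) by (simp add: case_prod_unfold less_imp_neq[symmetric] mult.assoc)
qed

lemma mutual_info_channel_output:
  fixes r :: "'a::finite \<Rightarrow> real"
  assumes "channel k" "\<And>a. 0 < r a"
  shows "mutual_info (\<lambda>(a, b). r a * k a b) = ereal (chan_info r k)"
proof -
  have "marg1 (\<lambda>(a, b). r a * k a b) = r"
    using has_sum_cmult_right[OF channel_has_sum[OF assms(1)]]
    by (auto simp: marg1_def infsumI)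
  moreover have "marg2 (\<lambda>(a, b). r a * k a b) = apply_chan k r"
    by (auto simp: marg2_def apply_chan_def mult.commute)
  ultimately show ?thesis
    unfolding mutual_info_def using kl_div_channel_output[OF assms] by simp
qed

text \<open>\<open>k\<close> followed by an erasure with probability \<open>1 - a\<close>: the erasure symbol is \<open>0\<close>
  and the outputs of \<open>k\<close> are shifted by one.\<close>
definition erasure :: "real \<Rightarrow> ('a \<Rightarrow> nat \<Rightarrow> real) \<Rightarrow> 'a \<Rightarrow> nat \<Rightarrow> real" where
  "erasure a k x t = (if t = 0 then 1 - a else a * k x (t - 1))"

lemma channel_erasure:
  assumes "channel k" "0 \<le> a" "a \<le> 1"
  shows "channel (erasure a k)"
  unfolding channel_def
proof (intro allI conjI)
  show "0 \<le> erasure a k x t" for x t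
    using assms by (simp add: erasure_def channel_nonneg)
  fix x
  have "((\<lambda>t. if t = 0 then 1 - a else a * k x (t - 1)) has_sum ((1 - a) + a * 1)) UNIV"
    by (intro has_sum_nat_shift has_sum_cmult_right channel_has_sum assms(1))
  then show "(erasure a k x has_sum 1) UNIV"
    by (simp add: erasure_def[abs_def])
qed

lemma apply_chan_erasure:
  fixes r :: "'a::finite \<Rightarrow> real"
  assumes "(\<Sum>a\<in>UNIV. r a) = 1"
  shows "apply_chan (erasure a k) r t = (if t = 0 then 1 - a else a * apply_chan k r (t - 1))"
  using assms by (simp add: apply_chan_def erasure_def sum_distrib_left[symmetric] mult.assoc)

lemma xlnx_ratio_cancel: "(c * u) * ln ((c * u) / (c * v)) = c * (u * ln (u / v))" for c u v :: real
  by (cases "c = 0") auto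

lemma chan_info_erasure:
  fixes r :: "'a::finite \<Rightarrow> real"
  assumes "channel k" "0 \<le> a" "a \<le> 1" "\<And>x. 0 < r x" "(\<Sum>x\<in>UNIV. r x) = 1"
  shows "chan_info r (erasure a k) = a * chan_info r k"
proof -
  have "(\<Sum>\<^sub>\<infinity>t. erasure a k x t * ln (erasure a k x t / apply_chan (erasure a k) r t))
      = a * (\<Sum>\<^sub>\<infinity>t. k x t * ln (k x t / apply_chan k r t))" for x
  proof -
    have "((\<lambda>t. if t = 0 then 0 else a * (k x (t - 1) * ln (k x (t - 1) / apply_chan k r (t - 1))))
        has_sum (0 + a * (\<Sum>\<^sub>\<infinity>t. k x t * ln (k x t / apply_chan k r t)))) UNIV"
      using assms by (intro has_sum_nat_shift has_sum_cmult_right has_sum_channel_divergence)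
    moreover have
      "(\<lambda>t. if t = 0 then 0 else a * (k x (t - 1) * ln (k x (t - 1) / apply_chan k r (t - 1))))
        = (\<lambda>t. erasure a k x t * ln (erasure a k x t / apply_chan (erasure a k) r t))"
      using assms(5) by (auto simp: apply_chan_erasure erasure_def xlnx_ratio_cancel)
    ultimately show ?thesis
      by (simp add: infsumI)
  qed
  then show ?thesis
    unfolding chan_info_def by (simp add: sum_distrib_left mult.left_commute)
qed

lemma channel_ib_ext:
  fixes k :: "'x \<Rightarrow> nat \<Rightarrow> real"
  assumes "channel k"
  shows "channel (ib_ext k :: 'x \<times> 'y::finite \<Rightarrow> nat \<times> 'y \<Rightarrow> real)"
  unfolding channel_def
proof (intro allI conjI)
  fix xy :: "'x \<times> 'y" and z :: "nat \<times> 'y"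
  show "0 \<le> ib_ext k xy z"
    using assms by (simp add: ib_ext_def channel_nonneg split: prod.split)
next
  fix xy :: "'x \<times> 'y"
  obtain x y where xy: "xy = (x, y)"
    by fastforce
  have "(ib_ext k (x, y) has_sum (\<Sum>y'\<in>UNIV. 1 * (if y' = y then 1 else 0))) UNIV"
    using assms by (intro has_sum_prod_finite_snd)
      (simp add: ib_ext_def has_sum_cmult_left channel_has_sum)
  then show "(ib_ext k xy has_sum 1) UNIV"
    by (simp add: xy)
qed

lemma ib_ext_in_C_IB: "channel k \<Longrightarrow> ib_ext k \<in> C_IB"
  unfolding C_IB_def by blast

lemma ball_C_IB_iff: "(\<forall>k'\<in>C_IB. P k') \<longleftrightarrow> (\<forall>k. channel k \<longrightarrow> P (ib_ext k))"
  unfolding C_IB_def by blast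

lemma apply_chan_ib_ext:
  fixes r :: "'x::finite \<times> 'y::finite \<Rightarrow> real"
  shows "apply_chan (ib_ext k) r (t, y) = (\<Sum>x\<in>UNIV. r (x, y) * k x t)"
proof -
  have "(\<Sum>y'\<in>UNIV. k x t * (if y = y' then 1 else 0) * r (x, y')) = r (x, y) * k x t" for x
    by (subst sum.cong[OF refl, of _ _ "\<lambda>y'. if y = y' then r (x, y) * k x t else 0"]) auto
  then show ?thesis
    by (simp add: apply_chan_def ib_ext_def sum_UNIV_prod)
qed

lemma min_on_level_iff_min_on_superlevel:
  fixes f g :: "'c \<Rightarrow> real" and scale :: "real \<Rightarrow> 'c \<Rightarrow> 'c"
  assumes "0 \<le> lam" "c \<in> C"
    and g_le_f: "\<And>c. c \<in> C \<Longrightarrow> g c \<le> f c"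
    and scale: "\<And>a c. c \<in> C \<Longrightarrow> 0 \<le> a \<Longrightarrow> a \<le> 1 \<Longrightarrow>
      scale a c \<in> C \<and> f (scale a c) = a * f c \<and> g (scale a c) = a * g c"
  shows "(g c = lam \<and> (\<forall>c'\<in>C. g c' = lam \<longrightarrow> f c \<le> f c')) \<longleftrightarrow>
    (lam \<le> g c \<and> (\<forall>c'\<in>C. lam \<le> g c' \<longrightarrow> f c \<le> f c'))"
proof
  assume level: "g c = lam \<and> (\<forall>c'\<in>C. g c' = lam \<longrightarrow> f c \<le> f c')"
  show "lam \<le> g c \<and> (\<forall>c'\<in>C. lam \<le> g c' \<longrightarrow> f c \<le> f c')"
  proof (intro conjI ballI impI)
    fix c' assume "c' \<in> C" "lam \<le> g c'"
    \<comment> \<open>if \<open>g c' = 0\<close> then \<open>lam = 0\<close>, and the junk value \<open>a = 0\<close> still works\<close>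
    define a where "a = lam / g c'"
    have "0 \<le> a" "a \<le> 1"
      using \<open>0 \<le> lam\<close> \<open>lam \<le> g c'\<close> by (auto simp: a_def divide_le_eq_1)
    have "a * g c' = lam"
      using \<open>0 \<le> lam\<close> \<open>lam \<le> g c'\<close> by (cases "g c' = 0") (auto simp: a_def)
    then have "scale a c' \<in> C" "g (scale a c') = lam"
      using scale[OF \<open>c' \<in> C\<close> \<open>0 \<le> a\<close> \<open>a \<le> 1\<close>] by simp_all
    then have "f c \<le> f (scale a c')"
      using level by blast
    also have "\<dots> = a * f c'"
      using scale[OF \<open>c' \<in> C\<close> \<open>0 \<le> a\<close> \<open>a \<le> 1\<close>] by simp
    also have "\<dots> \<le> f c'"
      using g_le_f[OF \<open>c' \<in> C\<close>] \<open>0 \<le> lam\<close> \<open>lam \<le> g c'\<close> \<open>0 \<le> a\<close> \<open>a \<le> 1\<close>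
      by (intro mult_left_le_one_le) auto
    finally show "f c \<le> f c'" .
  qed (use level in simp)
next
  assume superlevel: "lam \<le> g c \<and> (\<forall>c'\<in>C. lam \<le> g c' \<longrightarrow> f c \<le> f c')"
  have "g c = lam"
  proof (rule ccontr)
    assume "g c \<noteq> lam"
    with superlevel \<open>0 \<le> lam\<close> have "lam < g c" "0 < g c"
      by auto
    define a where "a = lam / g c"
    have "0 \<le> a" "a < 1" "a * g c = lam"
      using \<open>0 \<le> lam\<close> \<open>lam < g c\<close> \<open>0 < g c\<close> by (auto simp: a_def field_simps)
    then have "scale a c \<in> C" "g (scale a c) = lam"
      using scale[OF \<open>c \<in> C\<close>] by simp_all
    then have "f c \<le> f (scale a c)"
      using superlevel by simp
    also have "\<dots> = a * f c"
      using scale[OF \<open>c \<in> C\<close> \<open>0 \<le> a\<close>] \<open>a < 1\<close> by simp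
    also have "\<dots> < f c"
      using g_le_f[OF \<open>c \<in> C\<close>] \<open>0 < g c\<close> \<open>a < 1\<close> by simp
    finally show False
      by simp
  qed
  with superlevel show "g c = lam \<and> (\<forall>c'\<in>C. g c' = lam \<longrightarrow> f c \<le> f c')"
    by auto
qed

locale ib_source =
  fixes p :: "'x::finite \<times> 'y::finite \<Rightarrow> real"
  assumes p_pos: "\<And>z. 0 < p z" and p_sum: "(\<Sum>z\<in>UNIV. p z) = 1"
begin

definition px :: "'x \<Rightarrow> real" where
  "px x = (\<Sum>y\<in>UNIV. p (x, y))"

definition py :: "'y \<Rightarrow> real" where
  "py y = (\<Sum>x\<in>UNIV. p (x, y))"

text \<open>The channel from \<open>Y\<close> to \<open>T\<close> of the Markov chain \<open>Y - X - T\<close>.\<close>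
definition y_channel :: "('x \<Rightarrow> 'b \<Rightarrow> real) \<Rightarrow> 'y \<Rightarrow> 'b \<Rightarrow> real" where
  "y_channel k y t = (\<Sum>x\<in>UNIV. p (x, y) * k x t) / py y"

lemma px_pos: "0 < px x"
  unfolding px_def using p_pos by (intro sum_pos) auto

lemma py_pos: "0 < py y"
  unfolding py_def using p_pos by (intro sum_pos) auto

lemma sum_px: "(\<Sum>x\<in>UNIV. px x) = 1"
  using p_sum unfolding px_def by (simp add: sum_UNIV_prod)

lemma sum_py: "(\<Sum>y\<in>UNIV. py y) = 1"
  using p_sum unfolding py_def by (subst sum.swap) (simp add: sum_UNIV_prod)

lemma marg1_p: "marg1 p = px"
  by (simp add: marg1_def px_def fun_eq_iff)

lemma marg2_p: "marg2 p = py"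
  by (simp add: marg2_def py_def fun_eq_iff)

lemma py_mult_y_channel: "py y * y_channel k y t = (\<Sum>x\<in>UNIV. p (x, y) * k x t)"
  using py_pos[of y] by (simp add: y_channel_def)

lemma channel_y_channel:
  assumes "channel k"
  shows "channel (y_channel k)"
  unfolding channel_def
proof (intro allI conjI)
  show "0 \<le> y_channel k y t" for y t
    unfolding y_channel_def using assms p_pos py_pos
    by (intro divide_nonneg_pos sum_nonneg mult_nonneg_nonneg) (auto simp: channel_nonneg less_imp_le)
  fix y
  have "((\<lambda>t. (\<Sum>x\<in>UNIV. p (x, y) * k x t) * (1 / py y)) has_sum
      (\<Sum>x\<in>UNIV. p (x, y) * 1) * (1 / py y)) UNIV"
    using assms by (intro has_sum_cmult_left has_sum_sum_finite has_sum_cmult_right channel_has_sum) auto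
  then show "(y_channel k y has_sum 1) UNIV"
    using py_pos[of y] by (simp add: y_channel_def[abs_def] py_def)
qed

lemma apply_chan_y_channel: "apply_chan (y_channel k) py = apply_chan k px"
proof
  fix t
  have "apply_chan (y_channel k) py t = (\<Sum>y\<in>UNIV. py y * y_channel k y t)"
    by (simp add: apply_chan_def mult.commute)
  also have "\<dots> = (\<Sum>y\<in>UNIV. \<Sum>x\<in>UNIV. p (x, y) * k x t)"
    by (simp only: py_mult_y_channel)
  also have "\<dots> = apply_chan k px t"
    unfolding apply_chan_def px_def by (subst sum.swap) (simp add: sum_distrib_left mult.commute)
  finally show "apply_chan (y_channel k) py t = apply_chan k px t" .
qed

lemma y_channel_erasure: "y_channel (erasure a k) = erasure a (y_channel k)"
proof (intro ext)
  fix y t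
  show "y_channel (erasure a k) y t = erasure a (y_channel k) y t"
    using py_pos[of y, unfolded py_def] by (simp add: y_channel_def erasure_def py_def
        sum_distrib_left[symmetric] sum_distrib_right[symmetric] mult.left_commute)
qed

lemma objB_eq:
  assumes "channel k"
  shows "objB p k = ereal (chan_info px k)"
proof -
  have "(\<lambda>(x, t). \<Sum>y\<in>UNIV. p (x, y) * k x t) = (\<lambda>(x, t). px x * k x t)"
    by (auto simp: fun_eq_iff px_def sum_distrib_right)
  then show ?thesis
    unfolding objB_def using mutual_info_channel_output[where r = px, OF assms px_pos] by simp
qed

lemma constrB_iff:
  assumes "channel k"
  shows "constrB p lam k \<longleftrightarrow> lam \<le> chan_info py (y_channel k)"
proof -
  have "(\<lambda>(y, t). \<Sum>x\<in>UNIV. p (x, y) * k x t) = (\<lambda>(y, t). py y * y_channel k y t)"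
    by (simp add: fun_eq_iff py_mult_y_channel)
  then show ?thesis
    unfolding constrB_def
    using mutual_info_channel_output[where r = py, OF channel_y_channel[OF assms] py_pos] by simp
qed

lemma constrA_iff:
  assumes "channel k"
  shows "constrA p lam (ib_ext k) \<longleftrightarrow> chan_info py (y_channel k) = lam"
proof -
  let ?J = "\<lambda>(y, t). py y * y_channel k y t"
  let ?G = "\<lambda>(y, t). py y * apply_chan (y_channel k) py t"
  have "apply_chan (ib_ext k) p = (\<lambda>z. ?J (prod.swap z))"
    by (auto simp: fun_eq_iff apply_chan_ib_ext py_mult_y_channel)
  moreover have "apply_chan (ib_ext k) (\<lambda>(x, y). marg1 p x * marg2 p y) (t, y) = ?G (y, t)" for t y
    by (simp add: apply_chan_ib_ext marg1_p marg2_p apply_chan_y_channel)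
      (simp add: apply_chan_def sum_distrib_left mult_ac)
  then have "apply_chan (ib_ext k) (\<lambda>(x, y). marg1 p x * marg2 p y) = (\<lambda>z. ?G (prod.swap z))"
    by auto
  moreover have "kl_div (\<lambda>z. ?J (prod.swap z)) (\<lambda>z. ?G (prod.swap z)) = kl_div ?J ?G"
    by (rule kl_div_reindex) simp
  ultimately have "kl_div (apply_chan (ib_ext k) p)
      (apply_chan (ib_ext k) (\<lambda>(x, y). marg1 p x * marg2 p y)) = ereal (chan_info py (y_channel k))"
    using kl_div_channel_output[where r = py, OF channel_y_channel[OF assms] py_pos] by simp
  then show ?thesis
    unfolding constrA_def by simp
qed

lemma objA_eq:
  assumes "channel k"
  shows "objA p (ib_ext k) = ereal (chan_info p (ib_ext k))"
  unfolding objA_def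
  using mutual_info_channel_output[where r = p, OF channel_ib_ext[OF assms] p_pos] .

lemma p_mult_le_py_mult_y_channel:
  assumes "channel k"
  shows "p (x, y) * k x t \<le> py y * y_channel k y t"
  unfolding py_mult_y_channel using assms p_pos
  by (intro member_le_sum) (auto intro: mult_nonneg_nonneg less_imp_le channel_nonneg)

lemma has_sum_y_channel_divergence:
  assumes "channel k"
  shows "((\<lambda>t. k x t * ln (k x t / (py y * y_channel k y t))) has_sum
           (\<Sum>\<^sub>\<infinity>t. k x t * ln (k x t / (py y * y_channel k y t)))) UNIV"
proof -
  have "(\<lambda>t. k x t * ln (k x t / (py y * y_channel k y t))) summable_on UNIV"
  proof (rule summable_on_xlnx_ratio[where c = "p (x, y)"])
    show "k x summable_on UNIV"
      using channel_has_sum[OF assms] by (rule has_sum_imp_summable)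
    show "(\<lambda>t. py y * y_channel k y t) summable_on UNIV"
      using channel_has_sum[OF channel_y_channel[OF assms]]
      by (intro summable_on_cmult_right has_sum_imp_summable)
  qed (use assms p_pos p_mult_le_py_mult_y_channel in \<open>auto simp: channel_nonneg\<close>)
  then show ?thesis
    by (simp add: summable_iff_has_sum_infsum[symmetric])
qed

lemma chan_info_ib_ext_eq_sum:
  assumes "channel k"
  shows "chan_info p (ib_ext k)
    = (\<Sum>x\<in>UNIV. \<Sum>y\<in>UNIV. p (x, y) * (\<Sum>\<^sub>\<infinity>t. k x t * ln (k x t / (py y * y_channel k y t))))"
proof -
  have "(\<Sum>\<^sub>\<infinity>z. ib_ext k (x, y) z * ln (ib_ext k (x, y) z / apply_chan (ib_ext k) p z))
      = (\<Sum>\<^sub>\<infinity>t. k x t * ln (k x t / (py y * y_channel k y t)))" for x y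
  proof -
    have "((\<lambda>z. ib_ext k (x, y) z * ln (ib_ext k (x, y) z / apply_chan (ib_ext k) p z))
        has_sum (\<Sum>y'\<in>UNIV. if y' = y
          then \<Sum>\<^sub>\<infinity>t. k x t * ln (k x t / (py y * y_channel k y t)) else 0)) UNIV"
      using has_sum_y_channel_divergence[OF assms]
      by (intro has_sum_prod_finite_snd)
        (simp only: apply_chan_ib_ext, simp add: ib_ext_def py_mult_y_channel)
    then show ?thesis
      by (simp add: infsumI)
  qed
  then show ?thesis
    by (simp add: chan_info_def sum_UNIV_prod)
qed

lemma py_mult_y_channel_divergence:
  assumes "channel k"
  shows "py y * (\<Sum>\<^sub>\<infinity>t. y_channel k y t * ln (y_channel k y t / apply_chan k px t))
    = (\<Sum>x\<in>UNIV. p (x, y) * ((\<Sum>\<^sub>\<infinity>t. k x t * ln (k x t / apply_chan k px t))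
        - (\<Sum>\<^sub>\<infinity>t. k x t * ln (k x t / (py y * y_channel k y t))) - ln (py y)))"
proof -
  let ?q = "apply_chan k px" and ?w = "y_channel k y"
  have split_ln: "p (x, y) * (k x t * ln (k x t / ?q t) - k x t * ln (k x t / (py y * ?w t))
      - k x t * ln (py y)) = p (x, y) * k x t * ln (?w t / ?q t)" for x t
  proof (cases "k x t = 0")
    case False
    then have "0 < k x t"
      using assms by (simp add: less_le channel_nonneg)
    then have "0 < p (x, y) * k x t" "0 < px x * k x t"
      using p_pos px_pos by simp_all
    moreover have "p (x, y) * k x t \<le> py y * ?w t" "px x * k x t \<le> ?q t"
      using p_mult_le_py_mult_y_channel[OF assms] apply_chan_ge[OF assms less_imp_le[OF px_pos]]
      by auto
    ultimately have "0 < py y * ?w t" "0 < ?q t"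
      by linarith+
    then have "0 < ?w t"
      using py_pos[of y] by (simp add: zero_less_mult_iff)
    with \<open>0 < k x t\<close> \<open>0 < ?q t\<close> show ?thesis
      using py_pos[of y] by (simp add: ln_div ln_mult algebra_simps)
  qed simp
  have "((\<lambda>t. \<Sum>x\<in>UNIV. p (x, y) * (k x t * ln (k x t / ?q t)
        - k x t * ln (k x t / (py y * ?w t)) - k x t * ln (py y))) has_sum
      (\<Sum>x\<in>UNIV. p (x, y) * ((\<Sum>\<^sub>\<infinity>t. k x t * ln (k x t / ?q t))
        - (\<Sum>\<^sub>\<infinity>t. k x t * ln (k x t / (py y * ?w t))) - 1 * ln (py y)))) UNIV"
    using assms px_pos
    by (intro has_sum_sum_finite has_sum_cmult_right has_sum_diff has_sum_cmult_left
        has_sum_channel_divergence has_sum_y_channel_divergence channel_has_sum) auto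
  moreover have "(\<lambda>t. \<Sum>x\<in>UNIV. p (x, y) * (k x t * ln (k x t / ?q t)
        - k x t * ln (k x t / (py y * ?w t)) - k x t * ln (py y)))
      = (\<lambda>t. py y * (?w t * ln (?w t / ?q t)))"
    by (simp only: split_ln) (simp add: mult.assoc[symmetric] py_mult_y_channel sum_distrib_right)
  moreover have "((\<lambda>t. py y * (?w t * ln (?w t / ?q t))) has_sum
      py y * (\<Sum>\<^sub>\<infinity>t. ?w t * ln (?w t / ?q t))) UNIV"
    using has_sum_channel_divergence[where r = py, OF channel_y_channel[OF assms] py_pos]
    by (intro has_sum_cmult_right) (simp add: apply_chan_y_channel)
  ultimately show ?thesis
    using has_sum_unique by fastforce
qed

lemma chan_info_ib_ext:
  assumes "channel k"
  shows "chan_info p (ib_ext k)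
    = chan_info px k - chan_info py (y_channel k) - (\<Sum>y\<in>UNIV. py y * ln (py y))"
proof -
  define D1 where "D1 x = (\<Sum>\<^sub>\<infinity>t. k x t * ln (k x t / apply_chan k px t))" for x
  define D2 where "D2 x y = (\<Sum>\<^sub>\<infinity>t. k x t * ln (k x t / (py y * y_channel k y t)))" for x y
  have "chan_info py (y_channel k) = (\<Sum>y\<in>UNIV. \<Sum>x\<in>UNIV. p (x, y) * (D1 x - D2 x y - ln (py y)))"
    unfolding chan_info_def apply_chan_y_channel D1_def D2_def
    using py_mult_y_channel_divergence[OF assms] by simp
  also have "\<dots> = (\<Sum>x\<in>UNIV. \<Sum>y\<in>UNIV. p (x, y) * D1 x)
      - (\<Sum>x\<in>UNIV. \<Sum>y\<in>UNIV. p (x, y) * D2 x y) - (\<Sum>y\<in>UNIV. \<Sum>x\<in>UNIV. p (x, y) * ln (py y))"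
    by (subst (1 2) sum.swap) (simp add: right_diff_distrib sum_subtractf)
  also have "(\<Sum>x\<in>UNIV. \<Sum>y\<in>UNIV. p (x, y) * D1 x) = chan_info px k"
    by (simp add: chan_info_def D1_def px_def sum_distrib_right)
  also have "(\<Sum>x\<in>UNIV. \<Sum>y\<in>UNIV. p (x, y) * D2 x y) = chan_info p (ib_ext k)"
    by (simp add: chan_info_ib_ext_eq_sum[OF assms] D2_def)
  also have "(\<Sum>y\<in>UNIV. \<Sum>x\<in>UNIV. p (x, y) * ln (py y)) = (\<Sum>y\<in>UNIV. py y * ln (py y))"
    by (simp add: py_def sum_distrib_right)
  finally show ?thesis
    by simp
qed

lemma chan_info_y_channel_le:
  fixes k :: "'x \<Rightarrow> nat \<Rightarrow> real"
  assumes "channel k"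
  shows "chan_info py (y_channel k) \<le> chan_info px k"
proof -
  have "- ln (py y) \<le> (\<Sum>\<^sub>\<infinity>t. k x t * ln (k x t / (py y * y_channel k y t)))" for x y
  proof (rule gibbs_inequality)
    show "((\<lambda>t. py y * y_channel k y t) has_sum py y) UNIV"
      using has_sum_cmult_right[OF channel_has_sum[OF channel_y_channel[OF assms]]] by simp
    show "py y * y_channel k y t \<noteq> 0" if "k x t \<noteq> 0" for t
      using that p_pos[of "(x, y)"] p_mult_le_py_mult_y_channel[OF assms, of x y t]
        channel_nonneg[OF assms, of x t]
      by (smt (verit) mult_pos_pos)
    show "0 \<le> py y * y_channel k y t" for t
      using py_pos[of y] channel_nonneg[OF channel_y_channel[OF assms]] by simp
  qed (use assms py_pos has_sum_y_channel_divergence in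
      \<open>auto simp: channel_has_sum channel_nonneg channel_y_channel\<close>)
  then have "(\<Sum>x\<in>UNIV. \<Sum>y\<in>UNIV. p (x, y) * - ln (py y)) \<le> chan_info p (ib_ext k)"
    unfolding chan_info_ib_ext_eq_sum[OF assms] using p_pos
    by (intro sum_mono mult_left_mono) (auto intro: less_imp_le)
  moreover have "(\<Sum>x\<in>UNIV. \<Sum>y\<in>UNIV. p (x, y) * - ln (py y)) = - (\<Sum>y\<in>UNIV. py y * ln (py y))"
    by (subst sum.swap) (simp add: py_def sum_distrib_right sum_negf)
  ultimately show ?thesis
    using chan_info_ib_ext[OF assms] by simp
qed

end

theorem proposition5:
  fixes p :: "'x::finite \<times> 'y::finite \<Rightarrow> real"
    and lam :: real
    and kX :: "'x \<Rightarrow> nat \<Rightarrow> real"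
  assumes full_support: "\<forall>z. 0 < p z"
    and prob: "(\<Sum>z\<in>UNIV. p z) = 1"
    and lam_nonneg: "0 \<le> lam"
    and lam_le: "ereal lam \<le> mutual_info p"
    and kX_chan: "channel kX"
  shows "solves_A p lam (ib_ext kX) \<longleftrightarrow> solves_B p lam kX"
proof -
  interpret ib_source p
    using full_support prob by unfold_locales auto
  let ?IX = "\<lambda>k :: 'x \<Rightarrow> nat \<Rightarrow> real. chan_info px k"
    and ?IY = "\<lambda>k :: 'x \<Rightarrow> nat \<Rightarrow> real. chan_info py (y_channel k)"
  have "solves_A p lam (ib_ext kX) \<longleftrightarrow>
      ?IY kX = lam \<and> (\<forall>k\<in>Collect channel. ?IY k = lam \<longrightarrow> ?IX kX \<le> ?IX k)"
    unfolding solves_A_def ball_C_IB_iff using kX_chan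
    by (auto simp: ib_ext_in_C_IB constrA_iff objA_eq chan_info_ib_ext)
  also have "\<dots> \<longleftrightarrow> lam \<le> ?IY kX \<and> (\<forall>k\<in>Collect channel. lam \<le> ?IY k \<longrightarrow> ?IX kX \<le> ?IX k)"
    using lam_nonneg kX_chan chan_info_y_channel_le
    by (intro min_on_level_iff_min_on_superlevel[where scale = erasure])
      (auto simp: channel_erasure chan_info_erasure y_channel_erasure channel_y_channel
        px_pos py_pos sum_px sum_py)
  also have "\<dots> \<longleftrightarrow> solves_B p lam kX"
    using kX_chan by (auto simp: solves_B_def constrB_iff objB_eq)
  finally show ?thesis .
qed

end
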